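(* For every positive integer $s$ and every positive integer $l$, the vector of polynomials $I^{[lp^s-1]}_{p^s}(z)\in\mathbb Z[z]^n$ is a solution of the KZ system modulo $p^s$.
   Context: Let $p$ be an odd prime, $g\ge1$, $n=2g+1$, with $p>n$. Write $z=(z_1,\dots,z_n)$. For $1\le i\ne j\le n$ let $\Omega_{ij}$ be the $n\times n$ matrix whose $(i,i)$ and $(j,j)$ entries are $-1$, whose $(i,j)$ and $(j,i)$ entries are $1$, and all of whose other entries are $0$. The KZ system is the system for a column vector $I=(I_1,\dots,I_n)$ of functions of $z$: $\frac{\partial I}{\partial z_i}=\frac12\sum_{j\ne i}\frac{\Omega_{ij}}{z_i-z_j}\,I$ for $i=1,\dots,n$, together with $I_1+\dots+I_n=0$. For a positive integer $s$ let $\pi_s$ denote reduction modulo $p^s$ (on $\mathbb Z$, $\mathbb Z[z]$, $\mathbb Z[z]^n$). A vector $I(z)\in\mathbb Z[z]^n$ is a solution of the KZ system modulo $p^s$ if $\pi_s I\in(\mathbb Z/p^s\mathbb Z)[z]^n$ satisfies the KZ system (the differential equations being understood in $(\mathbb Z/p^s\mathbb Z)[z]$ after multiplying the $i$-th equation by $\prod_{j\ne i}(z_i-z_j)$). For a positive integer $r$ put $M_r=(p^r-1)/2$, $\Phi_{p^r}(x,z)=\prod_{i=1}^n(x-z_i)^{M_r}\in\mathbb Z[x,z]$, and expand $\Big(\frac{\Phi_{p^r}(x,z)}{x-z_1},\dots,\frac{\Phi_{p^r}(x,z)}{x-z_n}\Big)=\sum_i P^i_{p^r}(z)\,x^i$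 with $P^i_{p^r}(z)\in\mathbb Z[z]^n$. For a positive integer $l$ set $I^{[lp^r-1]}_{p^r}(z)=P^{lp^r-1}_{p^r}(z)$. *)

theory Defs
  imports "HOL-Library.Poly_Mapping" "HOL-Computational_Algebra.Polynomial"
begin

text \<open>Multivariate polynomials with integer coefficients in the variables z_1, z_2, ...
  (variables indexed by nat; only z_1..z_n are used): finitely supported maps from
  exponent vectors to coefficients.\<close>
type_synonym mpoly = "(nat \<Rightarrow>\<^sub>0 nat) \<Rightarrow>\<^sub>0 int"

definition zvar :: "nat \<Rightarrow> mpoly" where
  "zvar i = Poly_Mapping.single (Poly_Mapping.single i 1) 1"

definition pdz :: "nat \<Rightarrow> mpoly \<Rightarrow> mpoly" where
  "pdz i P = (\<Sum>m\<in>Poly_Mapping.keys P. Poly_Mapping.single (m - Poly_Mapping.single i 1)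
                              (int (Poly_Mapping.lookup m i) * Poly_Mapping.lookup P m))"

text \<open>Congruence of polynomials modulo an integer q (all coefficients of the difference
  divisible by q), i.e. equality after reduction to (Z/qZ)[z].\<close>
definition mcong :: "int \<Rightarrow> mpoly \<Rightarrow> mpoly \<Rightarrow> bool" where
  "mcong q P Q \<longleftrightarrow> (\<forall>m. q dvd Poly_Mapping.lookup (P - Q) m)"

definition Omega_app :: "nat \<Rightarrow> nat \<Rightarrow> (nat \<Rightarrow> mpoly) \<Rightarrow> nat \<Rightarrow> mpoly" where
  "Omega_app i j I k =
     (if k = i then I j - I i else if k = j then I i - I j else 0)"

text \<open>The i-th equation is multiplied by prod_{j<>i}(z_i - z_j); the factor 1/2 is the inverse
  of 2 in Z/p^s Z, represented by the integer (p^s+1)/2.\<close>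
definition KZ_mod :: "nat \<Rightarrow> nat \<Rightarrow> nat \<Rightarrow> (nat \<Rightarrow> mpoly) \<Rightarrow> bool" where
  "KZ_mod p s n I \<longleftrightarrow>
     (let q = int p ^ s; half = (int p ^ s + 1) div 2 in
      (\<forall>i\<in>{1..n}. \<forall>k\<in>{1..n}.
         mcong q
           ((\<Prod>j\<in>{1..n}-{i}. zvar i - zvar j) * pdz i (I k))
           (of_int half * (\<Sum>j\<in>{1..n}-{i}.
               (\<Prod>l\<in>{1..n}-{i,j}. zvar i - zvar l) * Omega_app i j I k)))
      \<and> mcong q (\<Sum>k\<in>{1..n}. I k) 0)"

definition Mr :: "nat \<Rightarrow> nat \<Rightarrow> nat" where
  "Mr p r = (p ^ r - 1) div 2"

definition Phi :: "nat \<Rightarrow> nat \<Rightarrow> nat \<Rightarrow> mpoly poly" where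
  "Phi p r n = (\<Prod>i\<in>{1..n}. [:- zvar i, 1:] ^ Mr p r)"

definition Phi_quot :: "nat \<Rightarrow> nat \<Rightarrow> nat \<Rightarrow> nat \<Rightarrow> mpoly poly" where
  "Phi_quot p r n k = (THE Q. Phi p r n = [:- zvar k, 1:] * Q)"

definition Pvec :: "nat \<Rightarrow> nat \<Rightarrow> nat \<Rightarrow> nat \<Rightarrow> nat \<Rightarrow> mpoly" where
  "Pvec p r n i k = coeff (Phi_quot p r n k) i"

definition Ivec :: "nat \<Rightarrow> nat \<Rightarrow> nat \<Rightarrow> nat \<Rightarrow> nat \<Rightarrow> mpoly" where
  "Ivec p r n l = Pvec p r n (l * p ^ r - 1)"

end

theory Submission
  imports Defs
begin

text \<open>Write \<open>q = p\<^sup>s = 2M + 1\<close>, \<open>N + 1 = l q\<close> and \<open>F\<^sub>k = \<Phi>/(x - z\<^sub>k)\<close>. The derivatives of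
  the \<open>F\<^sub>k\<close> in \<open>z\<^sub>i\<close> and in \<open>x\<close> are combinations of \<open>G\<^sub>i\<^sub>j = \<Phi>/((x - z\<^sub>i)(x - z\<^sub>j))\<close> and
  \<open>H\<^sub>i = \<Phi>/(x - z\<^sub>i)\<^sup>2\<close>, and \<open>F\<^sub>i - F\<^sub>j = (z\<^sub>i - z\<^sub>j) G\<^sub>i\<^sub>j\<close>. Comparing coefficients of \<open>x\<^sup>N\<close>,
  the \<open>x\<^sup>N\<close>-coefficients of the \<open>F\<^sub>k\<close> satisfy the KZ equations over \<open>\<int>\<close> with \<open>1/2\<close> replaced
  by \<open>-M\<close>, up to a multiple of \<open>N + 1\<close> coming from \<open>d/dx x\<^sup>N\<^sup>+\<^sup>1\<close>; likewise
  \<open>M \<Sum>\<^sub>k F\<^sub>k = d\<Phi>/dx\<close>. Modulo \<open>q\<close> we have \<open>N + 1 \<equiv> 0\<close> and \<open>-M \<equiv> 1/2\<close>, and \<open>M\<close> is invertible.\<close>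

definition pdz_monom :: "nat \<Rightarrow> (nat \<Rightarrow>\<^sub>0 nat) \<Rightarrow> mpoly" where
  "pdz_monom i m =
     Poly_Mapping.single (m - Poly_Mapping.single i 1) (int (Poly_Mapping.lookup m i))"

lemma pdz_eq_frag_extend: "pdz i = frag_extend (pdz_monom i)"
proof
  fix P
  have "frag_cmul c (Poly_Mapping.single m d) = Poly_Mapping.single m (c * d)"
    for c d and m :: "nat \<Rightarrow>\<^sub>0 nat"
    by (rule poly_mapping_eqI) (simp add: lookup_single when_def)
  then show "pdz i P = frag_extend (pdz_monom i) P"
    by (simp add: pdz_def frag_extend_def pdz_monom_def mult.commute)
qed

lemma pdz_0 [simp]: "pdz i 0 = 0"
  by (simp add: pdz_eq_frag_extend)

lemma pdz_diff: "pdz i (a - b) = pdz i a - pdz i b"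
  by (simp add: pdz_eq_frag_extend frag_extend_diff)

lemma pdz_sum: "finite A \<Longrightarrow> pdz i (sum f A) = (\<Sum>x\<in>A. pdz i (f x))"
  by (simp add: pdz_eq_frag_extend frag_extend_sum o_def)

lemma pdz_frag_of: "pdz i (frag_of m) = pdz_monom i m"
  by (simp add: pdz_eq_frag_extend)

lemma pdz_monom_add:
  "pdz_monom i (m + m') = pdz_monom i m * frag_of m' + frag_of m * pdz_monom i m'"
proof -
  let ?e = "Poly_Mapping.single i (1::nat)"
  have shift_right: "m + m' - ?e = m + (m' - ?e) \<or> Poly_Mapping.lookup m' i = 0"
    by (auto intro!: poly_mapping_eqI simp: lookup_minus lookup_add lookup_single when_def)
  show ?thesis
  proof (cases "Poly_Mapping.lookup m i = 0")
    case True
    then show ?thesis using shift_right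
      by (auto simp: pdz_monom_def mult_single lookup_add)
  next
    case False
    then have "m + m' - ?e = m - ?e + m'"
      by (auto intro!: poly_mapping_eqI simp: lookup_minus lookup_add lookup_single when_def)
    then show ?thesis using shift_right
      by (auto simp: pdz_monom_def mult_single lookup_add single_add[symmetric] add_ac)
  qed
qed

lemma pdz_mult: "pdz i (a * b) = pdz i a * b + a * pdz i b"
proof (induction a rule: frag_induction[OF subset_UNIV])
  case (2 m)
  show ?case
  proof (induction b rule: frag_induction[OF subset_UNIV])
    case (2 m')
    show ?case by (simp add: mult_single pdz_frag_of pdz_monom_add)
  qed (simp_all add: pdz_diff algebra_simps)
qed (simp_all add: pdz_diff algebra_simps)

lemma pdz_1 [simp]: "pdz i 1 = 0"
  using pdz_mult[of i 1 1] by simp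

lemma pdz_zvar: "pdz i (zvar j) = (if i = j then 1 else 0)"
  by (auto simp: zvar_def pdz_frag_of pdz_monom_def lookup_single when_def)

definition pdz_poly :: "nat \<Rightarrow> mpoly poly \<Rightarrow> mpoly poly" where
  "pdz_poly i P = map_poly (pdz i) P"

lemma coeff_pdz_poly: "coeff (pdz_poly i P) n = pdz i (coeff P n)"
  by (simp add: pdz_poly_def coeff_map_poly)

lemma pdz_poly_1 [simp]: "pdz_poly i 1 = 0"
  by (rule poly_eqI) (simp add: coeff_pdz_poly coeff_1)

lemma pdz_poly_mult: "pdz_poly i (P * Q) = pdz_poly i P * Q + P * pdz_poly i Q"
  by (rule poly_eqI) (simp add: coeff_pdz_poly coeff_mult pdz_sum pdz_mult sum.distrib)

lemma pdz_poly_power_Suc: "pdz_poly i (P ^ Suc k) = smult (of_nat (Suc k)) (P ^ k * pdz_poly i P)"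
proof (induction k)
  case (Suc k)
  have "pdz_poly i (P ^ Suc (Suc k)) = pdz_poly i P * P ^ Suc k + P * pdz_poly i (P ^ Suc k)"
    by (simp only: power_Suc[of P "Suc k"] pdz_poly_mult)
  also have "\<dots> = smult (of_nat (Suc (Suc k))) (P ^ Suc k * pdz_poly i P)"
    unfolding Suc.IH of_nat_Suc[of "Suc k"] smult_add_left by (simp add: algebra_simps)
  finally show ?case .
qed (simp add: pdz_poly_mult)

lemma pdz_poly_power: "pdz_poly i (P ^ k) = smult (of_nat k) (P ^ (k - 1) * pdz_poly i P)"
  by (cases k) (simp_all only: pdz_poly_power_Suc, simp_all)

lemma pdz_poly_prod_eq_0:
  "finite A \<Longrightarrow> (\<And>a. a \<in> A \<Longrightarrow> pdz_poly i (f a) = 0) \<Longrightarrow> pdz_poly i (prod f A) = 0"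
  by (induction A rule: finite_induct) (simp_all add: pdz_poly_mult)

definition lin :: "nat \<Rightarrow> mpoly poly" where
  "lin k = [:- zvar k, 1:]"

lemma lin_nonzero: "lin k \<noteq> 0"
  by (simp add: lin_def)

lemma lin_diff: "lin i - lin j = [:zvar j - zvar i:]"
  by (simp add: lin_def)

lemma pderiv_lin: "pderiv (lin k) = 1"
  by (simp add: lin_def pderiv_pCons)

lemma pdz_poly_lin: "pdz_poly i (lin k) = (if i = k then -1 else 0)"
  by (rule poly_eqI)
    (auto simp: coeff_pdz_poly lin_def coeff_pCons pdz_zvar pdz_diff split: nat.splits
          simp flip: diff_0)

lemma pdz_poly_lin_power_same: "pdz_poly i (lin i ^ e) = - smult (of_nat e) (lin i ^ (e - 1))"
  by (simp add: pdz_poly_power pdz_poly_lin)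

lemma pdz_poly_lin_power_other: "i \<noteq> k \<Longrightarrow> pdz_poly i (lin k ^ e) = 0"
  by (simp add: pdz_poly_power pdz_poly_lin)

lemma smult_sum_right: "smult a (sum f A) = (\<Sum>x\<in>A. smult a (f x))"
  by (induction A rule: infinite_finite_induct) (simp_all add: smult_add_right)

definition lin_pow_prod :: "nat \<Rightarrow> nat set \<Rightarrow> mpoly poly" where
  "lin_pow_prod M A = (\<Prod>m\<in>A. lin m ^ M)"

lemma lin_pow_prod_remove:
  "finite A \<Longrightarrow> k \<in> A \<Longrightarrow> lin_pow_prod M A = lin k ^ M * lin_pow_prod M (A - {k})"
  by (simp add: lin_pow_prod_def prod.remove)

lemma pdz_poly_lin_pow_prod: "finite A \<Longrightarrow> i \<notin> A \<Longrightarrow> pdz_poly i (lin_pow_prod M A) = 0"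
  unfolding lin_pow_prod_def by (rule pdz_poly_prod_eq_0) (auto intro!: pdz_poly_lin_power_other)

lemma pderiv_lin_pow_prod:
  "finite A \<Longrightarrow>
   pderiv (lin_pow_prod M A) = smult (of_nat M) (\<Sum>j\<in>A. lin j ^ (M - 1) * lin_pow_prod M (A - {j}))"
  by (simp add: lin_pow_prod_def pderiv_prod pderiv_power pderiv_lin smult_sum_right algebra_simps)

lemma Phi_eq_lin_pow_prod: "Phi p r n = lin_pow_prod (Mr p r) {1..n}"
  by (simp add: Phi_def lin_pow_prod_def lin_def)

definition Phi_div :: "nat \<Rightarrow> nat \<Rightarrow> nat \<Rightarrow> mpoly poly" where
  "Phi_div n M k = lin k ^ (M - 1) * lin_pow_prod M ({1..n} - {k})"

definition Phi_div2 :: "nat \<Rightarrow> nat \<Rightarrow> nat \<Rightarrow> nat \<Rightarrow> mpoly poly" where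
  "Phi_div2 n M i j = lin i ^ (M - 1) * lin j ^ (M - 1) * lin_pow_prod M ({1..n} - {i, j})"

definition Phi_div_sq :: "nat \<Rightarrow> nat \<Rightarrow> nat \<Rightarrow> mpoly poly" where
  "Phi_div_sq n M i = lin i ^ (M - 2) * lin_pow_prod M ({1..n} - {i})"

lemma lin_power_pred: "M \<ge> 1 \<Longrightarrow> lin k ^ M = lin k * lin k ^ (M - 1)"
  by (metis Suc_diff_le diff_Suc_1 power_Suc)

lemma lin_pow_prod_remove2:
  "i \<in> {1..n} \<Longrightarrow> i \<noteq> j \<Longrightarrow>
   lin_pow_prod M ({1..n} - {j}) = lin i ^ M * lin_pow_prod M ({1..n} - {i, j})"
proof -
  assume "i \<in> {1..n}" "i \<noteq> j"
  moreover have "{1..n} - {j} - {i} = {1..n} - {i, j}"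
    by auto
  ultimately show ?thesis
    using lin_pow_prod_remove[of "{1..n} - {j}" i M] by simp
qed

lemma lin_pow_prod_eq_lin_Phi_div:
  "M \<ge> 1 \<Longrightarrow> k \<in> {1..n} \<Longrightarrow> lin_pow_prod M {1..n} = lin k * Phi_div n M k"
  using lin_pow_prod_remove[of "{1..n}" k M] by (simp add: Phi_div_def lin_power_pred)

lemma Phi_quot_eq_Phi_div:
  assumes "Mr p r \<ge> 1" "k \<in> {1..n}"
  shows "Phi_quot p r n k = Phi_div n (Mr p r) k"
  unfolding Phi_quot_def
proof (rule the_equality)
  show Phi: "Phi p r n = [:- zvar k, 1:] * Phi_div n (Mr p r) k"
    using assms lin_pow_prod_eq_lin_Phi_div Phi_eq_lin_pow_prod lin_def by metis
  fix Q
  assume "Phi p r n = [:- zvar k, 1:] * Q"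
  then have "lin k * Q = lin k * Phi_div n (Mr p r) k"
    using Phi by (simp add: lin_def)
  then show "Q = Phi_div n (Mr p r) k"
    using lin_nonzero by simp
qed

lemma Phi_div_diff:
  assumes "i \<in> {1..n}" "j \<in> {1..n}" "i \<noteq> j" "M \<ge> 1"
  shows "Phi_div n M i - Phi_div n M j = smult (zvar i - zvar j) (Phi_div2 n M i j)"
proof -
  have "Phi_div n M i - Phi_div n M j = (lin j - lin i) * Phi_div2 n M i j"
    using assms lin_pow_prod_remove2[of i n j M] lin_pow_prod_remove2[of j n i M]
    by (simp add: Phi_div_def Phi_div2_def lin_power_pred insert_commute algebra_simps)
  then show ?thesis
    by (simp add: lin_diff)
qed

lemma pdz_poly_Phi_div_other:
  assumes "i \<in> {1..n}" "i \<noteq> k"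
  shows "pdz_poly i (Phi_div n M k) = - smult (of_nat M) (Phi_div2 n M i k)"
proof -
  have "pdz_poly i (Phi_div n M k) =
        lin k ^ (M - 1) * (pdz_poly i (lin i ^ M) * lin_pow_prod M ({1..n} - {i, k}))"
    using assms lin_pow_prod_remove2[of i n k M]
    by (simp add: Phi_div_def pdz_poly_mult pdz_poly_lin_power_other pdz_poly_lin_pow_prod)
  then show ?thesis
    by (simp add: pdz_poly_lin_power_same Phi_div2_def mult.assoc mult.left_commute)
qed

lemma pdz_poly_Phi_div_same:
  "pdz_poly i (Phi_div n M i) = - smult (of_nat (M - 1)) (Phi_div_sq n M i)"
  by (simp add: Phi_div_def Phi_div_sq_def pdz_poly_mult pdz_poly_lin_pow_prod
      pdz_poly_lin_power_same numeral_2_eq_2)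

lemma pderiv_lin_pow_prod_eq_sum_Phi_div:
  "pderiv (lin_pow_prod M {1..n}) = smult (of_nat M) (\<Sum>k\<in>{1..n}. Phi_div n M k)"
  by (simp add: pderiv_lin_pow_prod Phi_div_def)

lemma pderiv_Phi_div:
  "pderiv (Phi_div n M i) =
   smult (of_nat (M - 1)) (Phi_div_sq n M i) + smult (of_nat M) (\<Sum>j\<in>{1..n} - {i}. Phi_div2 n M i j)"
  by (simp add: Phi_div_def Phi_div_sq_def Phi_div2_def pderiv_mult pderiv_lin_pow_prod
      pderiv_power pderiv_lin Diff_insert2[symmetric] sum_distrib_left numeral_2_eq_2 algebra_simps)

lemma coeff_Phi_div_diff:
  assumes "i \<in> {1..n}" "j \<in> {1..n}" "i \<noteq> j" "M \<ge> 1"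
  shows "coeff (Phi_div n M i) N - coeff (Phi_div n M j) N = (zvar i - zvar j) * coeff (Phi_div2 n M i j) N"
  using arg_cong[OF Phi_div_diff[OF assms], of "\<lambda>P. coeff P N"] by simp

lemma prod_zdiff_remove:
  assumes "j \<in> {1..n} - {i}"
  shows "(\<Prod>l\<in>{1..n}-{i,j}. zvar i - zvar l) * (zvar i - zvar j) = (\<Prod>l\<in>{1..n}-{i}. zvar i - zvar l)"
proof -
  have "{1..n} - {i} - {j} = {1..n} - {i, j}"
    by auto
  then show ?thesis
    using prod.remove[of "{1..n} - {i}" j "\<lambda>l. zvar i - zvar l"] assms by (simp add: mult.commute)
qed

lemma KZ_identity_off_diagonal:
  assumes "M \<ge> 1" "i \<in> {1..n}" "k \<in> {1..n}" "i \<noteq> k"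
    and I: "\<And>j. j \<in> {1..n} \<Longrightarrow> I j = coeff (Phi_div n M j) N"
  shows "(\<Prod>j\<in>{1..n}-{i}. zvar i - zvar j) * pdz i (I k)
       + of_nat M * (\<Sum>j\<in>{1..n}-{i}. (\<Prod>l\<in>{1..n}-{i,j}. zvar i - zvar l) * Omega_app i j I k) = 0"
proof -
  define g where "g = coeff (Phi_div2 n M i k) N"
  have "(\<Sum>j\<in>{1..n}-{i}. (\<Prod>l\<in>{1..n}-{i,j}. zvar i - zvar l) * Omega_app i j I k)
      = (\<Prod>l\<in>{1..n}-{i,k}. zvar i - zvar l) * (I i - I k)"
    using assms by (subst sum.remove[of _ k]) (auto simp: Omega_app_def intro!: sum.neutral)
  also have "\<dots> = (\<Prod>j\<in>{1..n}-{i}. zvar i - zvar j) * g"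
    using assms coeff_Phi_div_diff[of i n k M N] prod_zdiff_remove[of k n i]
    by (simp add: g_def mult.assoc[symmetric])
  finally show ?thesis
    using assms pdz_poly_Phi_div_other[of i n k M]
    by (simp add: I g_def flip: coeff_pdz_poly)
qed

lemma KZ_identity_diagonal:
  assumes "M \<ge> 1" "i \<in> {1..n}"
    and I: "\<And>j. j \<in> {1..n} \<Longrightarrow> I j = coeff (Phi_div n M j) N"
  shows "(\<Prod>j\<in>{1..n}-{i}. zvar i - zvar j) * pdz i (I i)
       + of_nat M * (\<Sum>j\<in>{1..n}-{i}. (\<Prod>l\<in>{1..n}-{i,j}. zvar i - zvar l) * Omega_app i j I i)
       = - (of_nat (Suc N) * (\<Prod>j\<in>{1..n}-{i}. zvar i - zvar j) * coeff (Phi_div n M i) (Suc N))"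
proof -
  let ?D = "\<Prod>j\<in>{1..n}-{i}. zvar i - zvar j"
  define g where "g j = coeff (Phi_div2 n M i j) N" for j
  define eta where "eta = coeff (Phi_div_sq n M i) N"
  define S where "S = (\<Sum>j\<in>{1..n}-{i}. g j)"
  have "(\<Sum>j\<in>{1..n}-{i}. (\<Prod>l\<in>{1..n}-{i,j}. zvar i - zvar l) * Omega_app i j I i)
      = (\<Sum>j\<in>{1..n}-{i}. - (?D * g j))"
  proof (rule sum.cong)
    fix j
    assume j: "j \<in> {1..n} - {i}"
    then have "I i - I j = (zvar i - zvar j) * g j"
      using assms coeff_Phi_div_diff[of i n j M N] by (simp add: I g_def)
    then have "I j - I i = - ((zvar i - zvar j) * g j)"
      by (metis minus_diff_eq)
    then show "(\<Prod>l\<in>{1..n}-{i,j}. zvar i - zvar l) * Omega_app i j I i = - (?D * g j)"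
      using j prod_zdiff_remove[OF j] by (simp add: Omega_app_def mult.assoc[symmetric])
  qed simp
  also have "\<dots> = - (?D * S)"
    by (simp add: S_def sum_negf sum_distrib_left)
  finally have Omega_sum: "(\<Sum>j\<in>{1..n}-{i}. (\<Prod>l\<in>{1..n}-{i,j}. zvar i - zvar l) * Omega_app i j I i)
      = - (?D * S)" .
  have pdz_I: "pdz i (I i) = - (of_nat (M - 1) * eta)"
    using assms pdz_poly_Phi_div_same[of i n M] by (simp add: I eta_def flip: coeff_pdz_poly)
  have "of_nat (Suc N) * coeff (Phi_div n M i) (Suc N) = of_nat (M - 1) * eta + of_nat M * S"
    using arg_cong[OF pderiv_Phi_div[of n M i], of "\<lambda>P. coeff P N"]
    by (simp add: coeff_pderiv eta_def g_def S_def coeff_sum sum_distrib_left)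
  then have "?D * pdz i (I i) + of_nat M * (- (?D * S))
      = - (?D * (of_nat (Suc N) * coeff (Phi_div n M i) (Suc N)))"
    unfolding pdz_I by (simp add: algebra_simps)
  then show ?thesis
    unfolding Omega_sum by (simp add: ac_simps)
qed

lemma sum_coeff_Phi_div:
  "of_nat M * (\<Sum>k\<in>{1..n}. coeff (Phi_div n M k) N)
   = of_nat (Suc N) * coeff (lin_pow_prod M {1..n}) (Suc N)"
  using arg_cong[OF pderiv_lin_pow_prod_eq_sum_Phi_div[of M n], of "\<lambda>P. coeff P N"]
  by (simp add: coeff_pderiv coeff_sum)

lemma lookup_of_int_mult: "Poly_Mapping.lookup (of_int c * X :: mpoly) m = c * Poly_Mapping.lookup X m"
proof (induction X rule: frag_induction[OF subset_UNIV])
  case (2 x)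
  have "(of_int c :: mpoly) * frag_of x = Poly_Mapping.single x c"
    by (simp flip: single_of_int add: mult_single)
  then show ?case
    by (simp add: lookup_single when_def)
qed (simp_all add: algebra_simps lookup_minus)

lemma mcong_if_dvd: "of_int q dvd A - B \<Longrightarrow> mcong q A B"
  by (auto simp: mcong_def lookup_of_int_mult)

lemma dvd_mult_cancel_half:
  fixes M X :: "'a::comm_ring_1"
  assumes "Q = 2 * M + 1" "Q dvd M * X"
  shows "Q dvd X"
proof -
  have "X = Q * X - 2 * (M * X)"
    using assms(1) by (simp add: algebra_simps)
  then show ?thesis
    by (metis assms(2) dvd_diff dvd_mult dvd_triv_left)
qed

lemma dvd_diff_mult_if_dvd_add_mult:
  fixes A S M Q H :: "'a::comm_ring_1"
  assumes "Q dvd A + M * S" "H = Q - M"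
  shows "Q dvd A - H * S"
proof -
  have "A - H * S = (A + M * S) - Q * S"
    unfolding assms(2) by (simp add: algebra_simps)
  then show ?thesis
    using assms(1) by (metis dvd_diff dvd_triv_left)
qed

lemma KZ_mod_if_coeff_Phi_div:
  assumes q: "int p ^ s = 2 * int M + 1" and "M \<ge> 1" and "int p ^ s dvd int (Suc N)"
    and I: "\<And>k. k \<in> {1..n} \<Longrightarrow> I k = coeff (Phi_div n M k) N"
  shows "KZ_mod p s n I"
proof -
  let ?q = "of_int (int p ^ s) :: mpoly"
  have half: "(of_int ((int p ^ s + 1) div 2) :: mpoly) = ?q - of_nat M"
    using q by simp
  obtain c where "int (Suc N) = int p ^ s * c"
    using assms(3) by blast
  then have "of_nat (Suc N) = ?q * of_int c"
    by (metis of_int_mult of_int_of_nat_eq)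
  then have q_dvd_Suc_N: "?q dvd of_nat (Suc N)"
    by simp
  have rows: "mcong (int p ^ s) ((\<Prod>j\<in>{1..n}-{i}. zvar i - zvar j) * pdz i (I k))
      (of_int ((int p ^ s + 1) div 2) *
        (\<Sum>j\<in>{1..n}-{i}. (\<Prod>l\<in>{1..n}-{i,j}. zvar i - zvar l) * Omega_app i j I k))"
    if "i \<in> {1..n}" "k \<in> {1..n}" for i k
  proof (rule mcong_if_dvd)
    let ?A = "(\<Prod>j\<in>{1..n}-{i}. zvar i - zvar j) * pdz i (I k)"
    let ?S = "\<Sum>j\<in>{1..n}-{i}. (\<Prod>l\<in>{1..n}-{i,j}. zvar i - zvar l) * Omega_app i j I k"
    have "?q dvd ?A + of_nat M * ?S"
    proof (cases "k = i")
      case True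
      then show ?thesis
        using KZ_identity_diagonal[OF \<open>M \<ge> 1\<close> \<open>i \<in> {1..n}\<close> I] q_dvd_Suc_N
        by (simp add: mult.assoc)
    next
      case False
      then show ?thesis
        using KZ_identity_off_diagonal[OF \<open>M \<ge> 1\<close> that not_sym[OF False] I] by simp
    qed
    then show "?q dvd ?A - of_int ((int p ^ s + 1) div 2) * ?S"
      using half by (rule dvd_diff_mult_if_dvd_add_mult)
  qed
  have "of_nat M * (\<Sum>k\<in>{1..n}. I k) = of_nat (Suc N) * coeff (lin_pow_prod M {1..n}) (Suc N)"
    using sum_coeff_Phi_div[of M n N] by (simp add: I)
  then have "?q dvd of_nat M * (\<Sum>k\<in>{1..n}. I k)"
    using q_dvd_Suc_N by simp
  then have "?q dvd (\<Sum>k\<in>{1..n}. I k)"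
    by (rule dvd_mult_cancel_half[rotated]) (simp add: q)
  then have "mcong (int p ^ s) (\<Sum>k\<in>{1..n}. I k) 0"
    by (simp add: mcong_if_dvd)
  then show ?thesis
    unfolding KZ_mod_def Let_def by (intro conjI ballI rows)
qed

theorem theorem4p4:
  fixes p g s l :: nat
  assumes "prime p" and "odd p" and "g \<ge> 1" and "p > 2 * g + 1"
    and "s \<ge> 1" and "l \<ge> 1"
  shows "KZ_mod p s (2 * g + 1) (Ivec p s (2 * g + 1) l)"
proof (rule KZ_mod_if_coeff_Phi_div)
  have "p ^ s \<ge> p"
    using assms by (simp add: self_le_power)
  have "odd (p ^ s)"
    using \<open>odd p\<close> by simp
  then obtain m where m: "p ^ s = 2 * m + 1"
    by (blast elim: oddE)
  then have "Mr p s = m"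
    by (simp add: Mr_def)
  then show "int p ^ s = 2 * int (Mr p s) + 1" and M_pos: "Mr p s \<ge> 1"
    using m \<open>p ^ s \<ge> p\<close> assms(4) by (simp_all flip: of_nat_power)
  have "Suc (l * p ^ s - 1) = l * p ^ s"
    using assms(6) \<open>p ^ s \<ge> p\<close> assms(4) by simp
  then show "int p ^ s dvd int (Suc (l * p ^ s - 1))"
    by simp
  show "Ivec p s (2 * g + 1) l k = coeff (Phi_div (2 * g + 1) (Mr p s) k) (l * p ^ s - 1)"
    if "k \<in> {1..2 * g + 1}" for k
    unfolding Ivec_def Pvec_def Phi_quot_eq_Phi_div[OF M_pos that] ..
qed

end
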